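(* For every $d\ge2$ and every $\epsilon\le\frac1{10}$, any bounded-error non-adaptive $\epsilon$-tester for convexity of functions $f\colon[n]^d\to\mathbb{R}$ has query complexity $\Omega\!\left((\tfrac nd)^{d/2}\right)$.
   Context: $[n]=\{0,\dots,n-1\}$ and $[n]^d\subseteq\mathbb{R}^d$. A function $f\colon X\to\mathbb{R}$ on a finite set $X\subseteq\mathbb{R}^d$ is convex if for every finite collection $x_1,\dots,x_k\in X$ and reals $\lambda_i\ge0$ with $\sum_i\lambda_i=1$ and $\sum_i\lambda_ix_i\in X$, one has $f(\sum_i\lambda_ix_i)\le\sum_i\lambda_if(x_i)$. $g$ is $\epsilon$-far from convex if every convex $h$ differs from $g$ on at least $\epsilon|X|$ points. A bounded-error $\epsilon$-tester is a randomized query algorithm accepting convex functions with probability at least $2/3$ and rejecting $\epsilon$-far functions with probability at least $2/3$; it is non-adaptive if all queried points are chosen before any value is observed. *)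

theory Defs
  imports "HOL-Probability.Probability"
begin

text \<open>Points of R^d are represented as functions nat => real that vanish at
  coordinates >= d (d varies within the statement).\<close>
type_synonym point = "nat \<Rightarrow> real"

definition grid :: "nat \<Rightarrow> nat \<Rightarrow> point set" where
  "grid n d = {x. (\<forall>i<d. x i \<in> real ` {0..<n}) \<and> (\<forall>i\<ge>d. x i = 0)}"

definition convex_comb :: "nat \<Rightarrow> (nat \<Rightarrow> real) \<Rightarrow> (nat \<Rightarrow> point) \<Rightarrow> point" where
  "convex_comb k l x = (\<lambda>j. \<Sum>i<k. l i * x i j)"

definition convex_fun_on :: "point set \<Rightarrow> (point \<Rightarrow> real) \<Rightarrow> bool" where
  "convex_fun_on X f \<longleftrightarrow>
     (\<forall>k l x. (\<forall>i<k. x i \<in> X) \<and> (\<forall>i<k. 0 \<le> l i) \<and> (\<Sum>i<k. l i) = 1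
          \<and> convex_comb k l x \<in> X
        \<longrightarrow> f (convex_comb k l x) \<le> (\<Sum>i<k. l i * f (x i)))"

definition far_from_convex :: "real \<Rightarrow> point set \<Rightarrow> (point \<Rightarrow> real) \<Rightarrow> bool" where
  "far_from_convex \<epsilon> X g \<longleftrightarrow>
     (\<forall>h. convex_fun_on X h \<longrightarrow> real (card {x\<in>X. g x \<noteq> h x}) \<ge> \<epsilon> * real (card X))"

text \<open>A non-adaptive randomized tester: a distribution over pairs (Q, D) of a
  list of query points chosen in advance and a (randomized) decision rule
  D giving the acceptance probability for the observed values.\<close>
type_synonym tester = "(point list \<times> (real list \<Rightarrow> real)) pmf"

definition accept_prob :: "tester \<Rightarrow> (point \<Rightarrow> real) \<Rightarrow> real" where
  "accept_prob T f = measure_pmf.expectation T (\<lambda>(Q, D). D (map f Q))"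

definition nonadaptive_tester :: "real \<Rightarrow> point set \<Rightarrow> tester \<Rightarrow> bool" where
  "nonadaptive_tester \<epsilon> X T \<longleftrightarrow>
     (\<forall>t\<in>set_pmf T. set (fst t) \<subseteq> X \<and> (\<forall>v. 0 \<le> snd t v \<and> snd t v \<le> 1)) \<and>
     (\<forall>f. convex_fun_on X f \<longrightarrow> accept_prob T f \<ge> 2/3) \<and>
     (\<forall>f. far_from_convex \<epsilon> X f \<longrightarrow> 1 - accept_prob T f \<ge> 2/3)"

definition query_bound :: "tester \<Rightarrow> nat \<Rightarrow> bool" where
  "query_bound T q \<longleftrightarrow> (\<forall>t\<in>set_pmf T. length (fst t) \<le> q)"

end

theory Submission
  imports Defs
begin

text \<open>Yao's principle with hard instances built from lattice directions. For a primitive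
  integer direction \<open>w\<close> with \<open>w\<^sub>0 > 0\<close>, the quadratic form \<open>|x \<and> w|\<^sup>2\<close> is constant
  along lines parallel to \<open>w\<close> and, on lattice points, has convexity gap at least \<open>1\<close> between
  distinct lines. Subtracting an arbitrary 0/1 label per line therefore keeps it convex (yes
  instances), while subtracting the label XOR the parity of the position along the line breaks
  midpoint convexity at a constant fraction of the grid (no instances, \<open>1/10\<close>-far). For a
  uniformly random labelling the two families look identical on any query set meeting every
  \<open>w\<close>-line at most once, and two distinct points lie on a common line for at most one
  primitive direction. Averaging over directions, a \<open>q\<close>-query tester can distinguish the two
  families with advantage \<open>1/3\<close> for at most \<open>3q\<^sup>2\<close> directions, while there are
  \<open>\<Omega>((n/d)\<^sup>d)\<close> primitive directions of \<open>\<ell>\<^sub>1\<close>-norm at most \<open>n/5\<close>.\<close>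

definition point_of :: "nat \<Rightarrow> (nat \<Rightarrow> nat) \<Rightarrow> point" where
  "point_of d f = (\<lambda>i. if i < d then real (f i) else 0)"

lemma inj_on_point_of: "inj_on (point_of d) (PiE {..<d} B)"
proof (rule inj_onI)
  fix f g assume f: "f \<in> PiE {..<d} B" and g: "g \<in> PiE {..<d} B"
    and eq: "point_of d f = point_of d g"
  show "f = g"
  proof (rule PiE_ext[OF f g])
    fix i assume "i \<in> {..<d}"
    then show "f i = g i" using fun_cong[OF eq, of i] unfolding point_of_def by auto
  qed
qed

lemma grid_eq_image_point_of: "grid n d = point_of d ` PiE {..<d} (\<lambda>_. {..<n})"
proof
  show "grid n d \<subseteq> point_of d ` PiE {..<d} (\<lambda>_. {..<n})"
  proof
    fix x assume x: "x \<in> grid n d"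
    then have "\<forall>i. \<exists>m. i < d \<longrightarrow> m < n \<and> x i = real m" unfolding grid_def by fastforce
    then obtain f where f: "\<And>i. i < d \<Longrightarrow> f i < n \<and> x i = real (f i)" by metis
    have "restrict f {..<d} \<in> PiE {..<d} (\<lambda>_. {..<n})" using f by auto
    moreover have "point_of d (restrict f {..<d}) = x"
      using f x unfolding point_of_def grid_def by (auto simp: fun_eq_iff)
    ultimately show "x \<in> point_of d ` PiE {..<d} (\<lambda>_. {..<n})" by (metis image_eqI)
  qed
  show "point_of d ` PiE {..<d} (\<lambda>_. {..<n}) \<subseteq> grid n d"
  proof
    fix x assume "x \<in> point_of d ` PiE {..<d} (\<lambda>_. {..<n})"
    then obtain f where f: "\<And>i. i < d \<Longrightarrow> f i < n" and x: "x = point_of d f"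
      by (auto simp: PiE_iff)
    have "real (f i) \<in> real ` {0..<n}" if "i < d" for i
      using f[OF that] by simp
    then show "x \<in> grid n d" unfolding grid_def x point_of_def by simp
  qed
qed

lemma finite_grid: "finite (grid n d)"
  unfolding grid_eq_image_point_of by (intro finite_imageI finite_PiE) auto

lemma card_grid: "card (grid n d) = n ^ d"
  unfolding grid_eq_image_point_of by (subst card_image[OF inj_on_point_of]) (simp add: card_PiE)

lemma grid_coordinate_Ints: "x \<in> grid n d \<Longrightarrow> x i \<in> \<int>"
  unfolding grid_def by (cases "i < d") (auto simp: image_iff)

lemma convex_fun_on_midpoint:
  assumes "convex_fun_on X h" "a \<in> X" "b \<in> X" "(\<lambda>j. (a j + b j) / 2) \<in> X"
  shows "h (\<lambda>j. (a j + b j) / 2) \<le> (h a + h b) / 2"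
proof -
  define x where "x = (\<lambda>i::nat. if i = 0 then a else b)"
  have mid: "convex_comb 2 (\<lambda>_. 1/2) x = (\<lambda>j. (a j + b j) / 2)"
    unfolding convex_comb_def x_def by (simp add: fun_eq_iff numeral_2_eq_2 field_simps)
  have "\<forall>i<2. x i \<in> X" using assms by (simp add: x_def numeral_2_eq_2 less_Suc_eq)
  then have "h (convex_comb 2 (\<lambda>_. 1/2) x) \<le> (\<Sum>i<2. 1/2 * h (x i))"
    using assms(1)[unfolded convex_fun_on_def, rule_format, where k=2 and l="\<lambda>_. 1/2" and x=x]
      assms(4)
    by (simp add: mid)
  then show ?thesis unfolding mid by (simp add: x_def numeral_2_eq_2 field_simps)
qed

lemma weighted_variance_eq:
  fixes l v :: "'i \<Rightarrow> 'a :: comm_ring_1"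
  assumes "(\<Sum>i\<in>A. l i) = 1"
  shows "(\<Sum>i\<in>A. l i * (v i)^2) - (\<Sum>i\<in>A. l i * v i)^2
       = (\<Sum>i\<in>A. l i * (v i - (\<Sum>j\<in>A. l j * v j))^2)"
proof -
  define u where "u = (\<Sum>j\<in>A. l j * v j)"
  have "(\<Sum>i\<in>A. l i * (v i - u)^2) = (\<Sum>i\<in>A. l i * (v i)^2 - 2 * u * (l i * v i) + u^2 * l i)"
    by (rule sum.cong) (auto simp: power2_eq_square algebra_simps)
  also have "\<dots> = (\<Sum>i\<in>A. l i * (v i)^2) - 2 * u * u + u^2"
    by (simp add: sum.distrib sum_subtractf sum_distrib_left[symmetric] u_def assms)
  finally show ?thesis by (simp add: u_def power2_eq_square)
qed

section \<open>Lines in a lattice direction and the yes instances\<close>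

definition wedge :: "(nat \<Rightarrow> int) \<Rightarrow> point \<Rightarrow> nat \<Rightarrow> nat \<Rightarrow> real" where
  "wedge w x a c = x a * of_int (w c) - x c * of_int (w a)"

definition wedge_sq :: "nat \<Rightarrow> (nat \<Rightarrow> int) \<Rightarrow> point \<Rightarrow> real" where
  "wedge_sq d w x = (\<Sum>a<d. \<Sum>c<d. (wedge w x a c)^2)"

text \<open>For \<open>w \<noteq> 0\<close>, two points have the same \<open>line_of d w\<close> iff they lie on a common line
  parallel to \<open>w\<close>.\<close>
definition line_of :: "nat \<Rightarrow> (nat \<Rightarrow> int) \<Rightarrow> point \<Rightarrow> nat \<times> nat \<Rightarrow> real" where
  "line_of d w x = (\<lambda>(a, c). if a < d \<and> c < d then wedge w x a c else 0)"

definition yes_fun :: "nat \<Rightarrow> (nat \<Rightarrow> int) \<Rightarrow> ((nat \<times> nat \<Rightarrow> real) \<Rightarrow> nat) \<Rightarrow> point \<Rightarrow> real" where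
  "yes_fun d w k x = wedge_sq d w x - real (k (line_of d w x))"

lemma wedge_convex_comb: "wedge w (convex_comb m l x) a c = (\<Sum>i<m. l i * wedge w (x i) a c)"
  unfolding wedge_def convex_comb_def
  by (simp add: sum_distrib_right sum_subtractf right_diff_distrib mult.assoc)

lemma wedge_diff_Ints: "x \<in> grid n d \<Longrightarrow> y \<in> grid n d \<Longrightarrow> wedge w x a c - wedge w y a c \<in> \<int>"
  unfolding wedge_def using grid_coordinate_Ints[of x n d] grid_coordinate_Ints[of y n d]
  by (intro Ints_diff Ints_mult Ints_of_int) auto

lemma wedge_sq_convex_comb_gap:
  fixes x :: "nat \<Rightarrow> point"
  assumes "(\<Sum>i<m. l i) = 1"
  defines "y \<equiv> convex_comb m l x"
  shows "(\<Sum>i<m. l i * wedge_sq d w (x i)) - wedge_sq d w y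
       = (\<Sum>i<m. l i * (\<Sum>a<d. \<Sum>c<d. (wedge w (x i) a c - wedge w y a c)^2))"
proof -
  have swap: "(\<Sum>i<m. l i * (\<Sum>a<d. \<Sum>c<d. f i a c)) = (\<Sum>a<d. \<Sum>c<d. \<Sum>i<m. l i * f i a c)"
    for f :: "nat \<Rightarrow> nat \<Rightarrow> nat \<Rightarrow> real"
    by (simp add: sum_distrib_left sum.swap[where A = "{..<m}"])
  have "(\<Sum>i<m. l i * wedge_sq d w (x i)) - wedge_sq d w y
      = (\<Sum>a<d. \<Sum>c<d. (\<Sum>i<m. l i * (wedge w (x i) a c)^2) - (\<Sum>i<m. l i * wedge w (x i) a c)^2)"
    unfolding wedge_sq_def swap unfolding y_def wedge_convex_comb by (simp add: sum_subtractf)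
  also have "\<dots> = (\<Sum>a<d. \<Sum>c<d. \<Sum>i<m. l i * (wedge w (x i) a c - wedge w y a c)^2)"
    unfolding y_def wedge_convex_comb weighted_variance_eq[OF assms(1)] ..
  finally show ?thesis unfolding swap .
qed

lemma wedge_gap_ge_1_if_line_of_ne:
  assumes "x \<in> grid n d" "y \<in> grid n d" "line_of d w x \<noteq> line_of d w y"
  shows "1 \<le> (\<Sum>a<d. \<Sum>c<d. (wedge w x a c - wedge w y a c)^2)"
proof -
  obtain a c where ac: "a < d" "c < d" "wedge w x a c \<noteq> wedge w y a c"
    using assms(3) unfolding line_of_def by (auto simp: fun_eq_iff split: if_splits)
  have "1 \<le> \<bar>wedge w x a c - wedge w y a c\<bar>"
    using ac(3) wedge_diff_Ints[OF assms(1,2)] by (intro Ints_nonzero_abs_ge1) auto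
  then have "1 \<le> (wedge w x a c - wedge w y a c)^2"
    by (metis abs_ge_self abs_le_square_iff abs_of_nonneg dual_order.trans one_power2 zero_le_one)
  also have "\<dots> \<le> (\<Sum>c<d. (wedge w x a c - wedge w y a c)^2)"
    using ac by (intro member_le_sum) auto
  also have "\<dots> \<le> (\<Sum>a<d. \<Sum>c<d. (wedge w x a c - wedge w y a c)^2)"
    using ac
    by (intro member_le_sum[where f = "\<lambda>a. \<Sum>c<d. (wedge w x a c - wedge w y a c)^2"] sum_nonneg)
      auto
  finally show ?thesis .
qed

text \<open>The convexity gap of \<open>wedge_sq\<close> at a lattice point is at least the weight of the
  points lying on other lines, which pays for any drop of the 0/1 label.\<close>
lemma convex_yes_fun:
  assumes "\<And>x. x \<in> grid n d \<Longrightarrow> k (line_of d w x) \<le> 1"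
  shows "convex_fun_on (grid n d) (yes_fun d w k)"
  unfolding convex_fun_on_def
proof (intro allI impI, elim conjE)
  fix m l x
  assume xs: "\<forall>i<m. x i \<in> grid n d" and l: "\<forall>i<m. 0 \<le> l i" "(\<Sum>i<m. l i) = 1"
    and y: "convex_comb m l x \<in> grid n d"
  define b where "b = (\<lambda>z. real (k (line_of d w z)))"
  define gap where "gap = (\<lambda>i. \<Sum>a<d. \<Sum>c<d. (wedge w (x i) a c - wedge w (convex_comb m l x) a c)^2)"
  have "l i * (b (x i) - b (convex_comb m l x)) \<le> l i * gap i" if i: "i < m" for i
  proof (intro mult_left_mono)
    show "b (x i) - b (convex_comb m l x) \<le> gap i"
    proof (cases "line_of d w (x i) = line_of d w (convex_comb m l x)")
      case True
      then show ?thesis unfolding b_def gap_def by (simp add: sum_nonneg)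
    next
      case False
      then have "1 \<le> gap i"
        unfolding gap_def using xs i y by (intro wedge_gap_ge_1_if_line_of_ne) auto
      moreover have "b (x i) \<le> 1" using assms xs i unfolding b_def by simp
      ultimately show ?thesis unfolding b_def by simp
    qed
  qed (use l i in auto)
  then have "(\<Sum>i<m. l i * b (x i)) - b (convex_comb m l x) \<le> (\<Sum>i<m. l i * gap i)"
    using sum_mono[of "{..<m}" "\<lambda>i. l i * (b (x i) - b (convex_comb m l x))"] l(2)
    by (simp add: right_diff_distrib sum_subtractf sum_distrib_right[symmetric])
  then show "yes_fun d w k (convex_comb m l x) \<le> (\<Sum>i<m. l i * yes_fun d w k (x i))"
    using wedge_sq_convex_comb_gap[OF l(2), of d w x]
    unfolding yes_fun_def b_def gap_def by (simp add: right_diff_distrib sum_subtractf)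
qed

section \<open>The no instances\<close>

definition line_shift :: "int \<Rightarrow> (nat \<Rightarrow> int) \<Rightarrow> point \<Rightarrow> point" where
  "line_shift t w x = (\<lambda>j. x j + of_int t * of_int (w j))"

definition line_pos :: "(nat \<Rightarrow> int) \<Rightarrow> point \<Rightarrow> int" where
  "line_pos w x = \<lfloor>x 0 / of_int (w 0)\<rfloor>"

definition no_bit :: "nat \<Rightarrow> (nat \<Rightarrow> int) \<Rightarrow> ((nat \<times> nat \<Rightarrow> real) \<Rightarrow> nat) \<Rightarrow> point \<Rightarrow> int" where
  "no_bit d w k x = (int (k (line_of d w x)) + line_pos w x) mod 2"

definition no_fun :: "nat \<Rightarrow> (nat \<Rightarrow> int) \<Rightarrow> ((nat \<times> nat \<Rightarrow> real) \<Rightarrow> nat) \<Rightarrow> point \<Rightarrow> real" where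
  "no_fun d w k x = wedge_sq d w x - of_int (no_bit d w k x)"

lemma line_shift_add: "line_shift s w (line_shift t w x) = line_shift (s + t) w x"
  unfolding line_shift_def by (simp add: fun_eq_iff algebra_simps)

lemma line_shift_zero [simp]: "line_shift 0 w x = x"
  unfolding line_shift_def by simp

lemma wedge_line_shift [simp]: "wedge w (line_shift t w x) a c = wedge w x a c"
  unfolding wedge_def line_shift_def by (simp add: algebra_simps)

lemma wedge_sq_line_shift [simp]: "wedge_sq d w (line_shift t w x) = wedge_sq d w x"
  unfolding wedge_sq_def by simp

lemma line_of_line_shift [simp]: "line_of d w (line_shift t w x) = line_of d w x"
  unfolding line_of_def wedge_line_shift ..

lemma line_pos_line_shift: "w 0 \<ge> 1 \<Longrightarrow> line_pos w (line_shift t w x) = line_pos w x + t"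
  unfolding line_pos_def line_shift_def by (simp add: add_divide_distrib)

lemma no_bit_line_shift: "w 0 \<ge> 1 \<Longrightarrow> no_bit d w k (line_shift t w x) = (no_bit d w k x + t) mod 2"
  unfolding no_bit_def by (simp add: line_pos_line_shift mod_add_left_eq add.assoc)

lemma no_bit_cases: "no_bit d w k x = 0 \<or> no_bit d w k x = 1"
  unfolding no_bit_def by auto

lemma no_fun_disagrees_with_convex:
  assumes "w 0 \<ge> 1" "convex_fun_on (grid n d) h" "no_bit d w k y = 0"
    and "y \<in> grid n d" "line_shift (-1) w y \<in> grid n d" "line_shift 1 w y \<in> grid n d"
  shows "\<exists>z\<in>{y, line_shift (-1) w y, line_shift 1 w y}. no_fun d w k z \<noteq> h z"
proof (rule ccontr)
  assume "\<not> ?thesis"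
  then have agree: "h z = no_fun d w k z" if "z \<in> {y, line_shift (-1) w y, line_shift 1 w y}" for z
    using that by auto
  have mid: "(\<lambda>j. (line_shift (-1) w y j + line_shift 1 w y j) / 2) = y"
    unfolding line_shift_def by (simp add: fun_eq_iff)
  have "h y \<le> (h (line_shift (-1) w y) + h (line_shift 1 w y)) / 2"
    using convex_fun_on_midpoint[OF assms(2,5,6)] assms(4) unfolding mid by simp
  moreover have "no_bit d w k (line_shift t w y) = 1" if "t \<in> {-1, 1}" for t
    using that no_bit_line_shift[where w=w and d=d and k=k and t=t and x=y, OF assms(1)] assms(3)
    by auto
  ultimately show False using agree assms(3) unfolding no_fun_def by simp
qed

lemma card_no_bit_zero_centres_le:
  assumes "w 0 \<ge> 1" "convex_fun_on (grid n d) h"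
  shows "card {y \<in> grid n d. line_shift (-1) w y \<in> grid n d \<and> line_shift 1 w y \<in> grid n d
                \<and> no_bit d w k y = 0}
         \<le> 2 * card {x \<in> grid n d. no_fun d w k x \<noteq> h x}" (is "card ?C \<le> 2 * card ?B")
proof -
  define B0 where "B0 = {x \<in> ?B. no_bit d w k x = 0}"
  define B1 where "B1 = {x \<in> ?B. no_bit d w k x = 1}"
  have fin: "finite B0" "finite B1" unfolding B0_def B1_def using finite_grid by auto
  have "?C \<subseteq> B0 \<union> (line_shift 1 w ` B1 \<union> line_shift (-1) w ` B1)"
  proof
    fix y assume y: "y \<in> ?C"
    then obtain z where z: "z \<in> {y, line_shift (-1) w y, line_shift 1 w y}" "no_fun d w k z \<noteq> h z"
      using no_fun_disagrees_with_convex[where w=w, OF assms] by blast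
    have "no_bit d w k (line_shift t w y) = 1" if "t \<in> {-1, 1}" for t
      using that y no_bit_line_shift[where w=w and d=d and k=k and t=t and x=y, OF assms(1)] by auto
    moreover have "y = line_shift 1 w (line_shift (-1) w y)"
      and "y = line_shift (-1) w (line_shift 1 w y)"
      by (simp_all add: line_shift_add)
    ultimately show "y \<in> B0 \<union> (line_shift 1 w ` B1 \<union> line_shift (-1) w ` B1)"
      using y z unfolding B0_def B1_def by blast
  qed
  then have "card ?C \<le> card (B0 \<union> (line_shift 1 w ` B1 \<union> line_shift (-1) w ` B1))"
    using fin by (intro card_mono) auto
  also have "\<dots> \<le> card B0 + (card (line_shift 1 w ` B1) + card (line_shift (-1) w ` B1))"
    by (intro order.trans[OF card_Un_le] add_left_mono card_Un_le)
  also have "\<dots> \<le> card B0 + 2 * card B1"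
    using card_image_le[OF fin(2), of "line_shift 1 w"]
      card_image_le[OF fin(2), of "line_shift (-1) w"]
    by linarith
  also have "card B0 + card B1 = card ?B"
  proof -
    have "?B = B0 \<union> B1" "B0 \<inter> B1 = {}" unfolding B0_def B1_def using no_bit_cases by auto
    then show ?thesis using card_Un_disjoint[OF fin] by simp
  qed
  ultimately show ?thesis by linarith
qed

definition safe_coords :: "(nat \<Rightarrow> int) \<Rightarrow> nat \<Rightarrow> nat \<Rightarrow> nat set" where
  "safe_coords w n i = {t. \<forall>s\<in>{0, -1, 1, 2}. 0 \<le> int t + s * w i \<and> int t + s * w i < int n}"

lemma card_safe_coords:
  assumes "3 * \<bar>w i\<bar> \<le> int n"
  shows "int (card (safe_coords w n i)) = int n - 3 * \<bar>w i\<bar>"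
proof (cases "w i \<ge> 0")
  case True
  then have "safe_coords w n i = {nat (w i)..<nat (int n - 2 * w i)}"
    unfolding safe_coords_def using assms by auto
  then show ?thesis using True assms by simp
next
  case False
  then have "safe_coords w n i = {nat (- 2 * w i)..<nat (int n + w i)}"
    unfolding safe_coords_def using assms by auto
  then show ?thesis using False assms by simp
qed

definition safe_points :: "nat \<Rightarrow> nat \<Rightarrow> (nat \<Rightarrow> int) \<Rightarrow> point set" where
  "safe_points n d w = {y. \<forall>s\<in>{0, -1, 1, 2}. line_shift s w y \<in> grid n d}"

lemma line_shift_point_of_in_grid_iff:
  assumes "\<forall>j\<ge>d. w j = 0"
  shows "line_shift s w (point_of d f) \<in> grid n d
     \<longleftrightarrow> (\<forall>i<d. 0 \<le> int (f i) + s * w i \<and> int (f i) + s * w i < int n)"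
proof -
  have "real (f i) + of_int s * of_int (w i) \<in> real ` {0..<n}
     \<longleftrightarrow> 0 \<le> int (f i) + s * w i \<and> int (f i) + s * w i < int n" for i
  proof -
    have eq: "real (f i) + of_int s * of_int (w i) = of_int (int (f i) + s * w i)" by simp
    have "of_int m \<in> real ` {0..<n} \<longleftrightarrow> 0 \<le> m \<and> m < int n" for m :: int
      by (auto simp: image_iff intro!: bexI[of _ "nat m"])
    then show ?thesis by (simp only: eq)
  qed
  then show ?thesis using assms unfolding grid_def line_shift_def point_of_def by auto
qed

lemma safe_points_subset_grid: "safe_points n d w \<subseteq> grid n d"
  unfolding safe_points_def using line_shift_zero by fastforce

lemma point_of_in_safe_points_iff:
  assumes "\<forall>j\<ge>d. w j = 0"
  shows "point_of d f \<in> safe_points n d w \<longleftrightarrow> (\<forall>i<d. f i \<in> safe_coords w n i)"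
  unfolding safe_points_def safe_coords_def mem_Collect_eq line_shift_point_of_in_grid_iff[OF assms]
  by blast

lemma safe_points_eq_image:
  assumes "\<forall>j\<ge>d. w j = 0"
  shows "safe_points n d w = point_of d ` PiE {..<d} (safe_coords w n)"
proof
  show "safe_points n d w \<subseteq> point_of d ` PiE {..<d} (safe_coords w n)"
  proof
    fix y assume y: "y \<in> safe_points n d w"
    then obtain f where f: "f \<in> PiE {..<d} (\<lambda>_. {..<n})" and yf: "y = point_of d f"
      using safe_points_subset_grid unfolding grid_eq_image_point_of by blast
    then have "f \<in> PiE {..<d} (safe_coords w n)"
      using y point_of_in_safe_points_iff[OF assms] by (auto simp: PiE_iff)
    then show "y \<in> point_of d ` PiE {..<d} (safe_coords w n)" using yf by blast
  qed
  show "point_of d ` PiE {..<d} (safe_coords w n) \<subseteq> safe_points n d w"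
    using point_of_in_safe_points_iff[OF assms] by (auto simp: PiE_iff)
qed

lemma card_safe_points:
  assumes "\<forall>j\<ge>d. w j = 0" "\<And>i. i < d \<Longrightarrow> 3 * \<bar>w i\<bar> \<le> int n"
  shows "real (card (safe_points n d w)) = (\<Prod>i<d. real n - 3 * real_of_int \<bar>w i\<bar>)"
proof -
  have "card (safe_points n d w) = (\<Prod>i<d. card (safe_coords w n i))"
    unfolding safe_points_eq_image[OF assms(1)] card_image[OF inj_on_point_of]
    by (rule card_PiE) simp
  then have "real (card (safe_points n d w)) = (\<Prod>i<d. real (card (safe_coords w n i)))"
    by (simp only: of_nat_prod)
  also have "\<dots> = (\<Prod>i<d. real n - 3 * real_of_int \<bar>w i\<bar>)"
  proof (rule prod.cong[OF refl])
    fix i assume "i \<in> {..<d}"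
    then have "real_of_int (int (card (safe_coords w n i))) = real_of_int (int n - 3 * \<bar>w i\<bar>)"
      using card_safe_coords assms(2) by simp
    then show "real (card (safe_coords w n i)) = real n - 3 * real_of_int \<bar>w i\<bar>"
      by simp
  qed
  finally show ?thesis .
qed

lemma card_safe_points_ge:
  assumes "\<forall>j\<ge>d. w j = 0" and small: "5 * (\<Sum>i<d. \<bar>w i\<bar>) \<le> int n" and n: "n \<ge> 1"
  shows "(2/5) * real n ^ d \<le> real (card (safe_points n d w))"
proof -
  define r where "r = (\<lambda>i. 3 * real_of_int \<bar>w i\<bar> / real n)"
  have "\<bar>w i\<bar> \<le> (\<Sum>i<d. \<bar>w i\<bar>)" if "i < d" for i
    using that by (intro member_le_sum) auto
  then have wi: "3 * \<bar>w i\<bar> \<le> int n" if "i < d" for i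
    using that small by fastforce
  have r01: "r i \<in> {0..1}" if "i \<in> {..<d}" for i
  proof -
    have "real_of_int (3 * \<bar>w i\<bar>) \<le> real_of_int (int n)"
      using wi[of i] that by (simp only: of_int_le_iff lessThan_iff)
    then show ?thesis using n unfolding r_def by simp
  qed
  have "5 * real_of_int (\<Sum>i<d. \<bar>w i\<bar>) \<le> real n"
    using small by (metis of_int_le_iff of_int_mult of_int_numeral of_int_of_nat_eq)
  then have "3 * real_of_int (\<Sum>i<d. \<bar>w i\<bar>) / real n \<le> 3/5"
    using n by (simp add: field_simps)
  moreover have "(\<Sum>i<d. r i) = 3 * real_of_int (\<Sum>i<d. \<bar>w i\<bar>) / real n"
    unfolding r_def by (simp add: sum_divide_distrib sum_distrib_left)
  ultimately have "real n ^ d * (2/5) \<le> real n ^ d * (1 - (\<Sum>i<d. r i))"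
    by (intro mult_left_mono) auto
  also have "\<dots> \<le> real n ^ d * (\<Prod>i<d. 1 - r i)"
    using Weierstrass_prod_ineq[of "{..<d}" r] r01 by (intro mult_left_mono) auto
  also have "\<dots> = (\<Prod>i<d. real n * (1 - r i))"
    by (simp add: prod.distrib)
  also have "\<dots> = (\<Prod>i<d. real n - 3 * real_of_int \<bar>w i\<bar>)"
    using n unfolding r_def by (intro prod.cong) (auto simp: right_diff_distrib)
  also have "\<dots> = real (card (safe_points n d w))"
    using card_safe_points[OF assms(1) wi] by simp
  finally show ?thesis by simp
qed

text \<open>Every safe point \<open>y\<close> is a centre \<open>y\<close> or \<open>y + w\<close> of a midpoint-convexity violation,
  depending on its bit, and each violation is witnessed by a point where \<open>no_fun\<close>
  must be corrected.\<close>
lemma far_from_convex_no_fun: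
  assumes "w 0 \<ge> 1" "\<forall>j\<ge>d. w j = 0" "5 * (\<Sum>i<d. \<bar>w i\<bar>) \<le> int n" "n \<ge> 1" "\<epsilon> \<le> 1/10"
  shows "far_from_convex \<epsilon> (grid n d) (no_fun d w k)"
  unfolding far_from_convex_def
proof (intro allI impI)
  fix h assume h: "convex_fun_on (grid n d) h"
  define C where "C = {y \<in> grid n d. line_shift (-1) w y \<in> grid n d \<and> line_shift 1 w y \<in> grid n d
                \<and> no_bit d w k y = 0}"
  have "safe_points n d w \<subseteq> C \<union> line_shift (-1) w ` C"
  proof
    fix y assume y: "y \<in> safe_points n d w"
    have y_eq: "y = line_shift (-1) w (line_shift 1 w y)" by (simp add: line_shift_add)
    show "y \<in> C \<union> line_shift (-1) w ` C"
    proof (cases "no_bit d w k y = 0")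
      case True
      then show ?thesis using y unfolding safe_points_def C_def by auto
    next
      case False
      then have "no_bit d w k y = 1" using no_bit_cases by blast
      then have "no_bit d w k (line_shift 1 w y) = 0"
        by (simp add: no_bit_line_shift[where w=w, OF assms(1)])
      then have "line_shift 1 w y \<in> C"
        using y unfolding safe_points_def C_def by (auto simp: line_shift_add)
      then show ?thesis using y_eq by blast
    qed
  qed
  then have "card (safe_points n d w) \<le> card C + card (line_shift (-1) w ` C)"
    using finite_grid unfolding C_def by (intro order.trans[OF card_mono card_Un_le]) auto
  also have "\<dots> \<le> 2 * card C"
    using card_image_le[of C] finite_grid unfolding C_def by auto
  also have "\<dots> \<le> 4 * card {x \<in> grid n d. no_fun d w k x \<noteq> h x}"
    using card_no_bit_zero_centres_le[where w=w and k=k, OF assms(1) h] unfolding C_def by linarith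
  finally have "(2/5) * real n ^ d \<le> 4 * real (card {x \<in> grid n d. no_fun d w k x \<noteq> h x})"
    using card_safe_points_ge[OF assms(2-4)] by linarith
  moreover have "\<epsilon> * real n ^ d \<le> (1/10) * real n ^ d"
    using assms(5) by (intro mult_right_mono) auto
  ultimately show "\<epsilon> * real (card (grid n d)) \<le> real (card {x \<in> grid n d. no_fun d w k x \<noteq> h x})"
    unfolding card_grid by simp
qed

section \<open>Random labellings\<close>

definition labellings :: "nat \<Rightarrow> nat \<Rightarrow> (nat \<Rightarrow> int) \<Rightarrow> ((nat \<times> nat \<Rightarrow> real) \<Rightarrow> nat) set" where
  "labellings n d w = PiE (line_of d w ` grid n d) (\<lambda>_. {0, 1})"

lemma finite_labellings: "finite (labellings n d w)"
  unfolding labellings_def using finite_grid by (intro finite_PiE) auto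

lemma labellings_nonempty: "labellings n d w \<noteq> {}"
  unfolding labellings_def by (simp add: PiE_eq_empty_iff)

lemma labelling_le_1: "k \<in> labellings n d w \<Longrightarrow> x \<in> grid n d \<Longrightarrow> k (line_of d w x) \<le> 1"
  unfolding labellings_def by (auto simp: PiE_iff)

definition flip_on :: "'a set \<Rightarrow> ('a \<Rightarrow> nat) \<Rightarrow> 'a \<Rightarrow> nat" where
  "flip_on S k = (\<lambda>p. if p \<in> S then 1 - k p else k p)"

lemma flip_on_flip_on: "S \<subseteq> P \<Longrightarrow> k \<in> PiE P (\<lambda>_. {0, 1}) \<Longrightarrow> flip_on S (flip_on S k) = k"
  unfolding flip_on_def by (force simp: fun_eq_iff PiE_iff)

lemma bij_betw_flip_on:
  assumes "S \<subseteq> P"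
  shows "bij_betw (flip_on S) (PiE P (\<lambda>_. {0, 1})) (PiE P (\<lambda>_. {0, 1}))"
proof -
  have "flip_on S \<in> PiE P (\<lambda>_. {0, 1}) \<rightarrow> PiE P (\<lambda>_. {0, 1})"
    using assms unfolding flip_on_def by (force simp: PiE_iff extensional_def)
  then show ?thesis
    by (intro bij_betwI[where g = "flip_on S"]) (use assms in \<open>auto simp: flip_on_flip_on\<close>)
qed

lemma no_bit_eq_flip:
  assumes "k (line_of d w x) \<le> 1"
  shows "no_bit d w k x
    = (if odd (line_pos w x) then 1 - int (k (line_of d w x)) else int (k (line_of d w x)))"
proof -
  have "(int m + p) mod 2 = (if odd p then 1 - int m else int m)"
    if "m \<le> 1" for m :: nat and p :: int
    using that unfolding even_iff_mod_2_eq_zero by presburger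
  from this[OF assms] show ?thesis unfolding no_bit_def .
qed

text \<open>Flipping the labels of the lines through the queries at odd positions turns \<open>no_fun\<close>
  into \<open>yes_fun\<close> on the queries; this is a well-defined bijection of labellings as long
  as no line carries two queries.\<close>
lemma sum_labellings_no_fun_eq_yes_fun:
  assumes Q: "set Q \<subseteq> grid n d" and inj: "inj_on (line_of d w) (set Q)"
  shows "(\<Sum>k\<in>labellings n d w. D (map (no_fun d w k) Q))
       = (\<Sum>k\<in>labellings n d w. D (map (yes_fun d w k) Q))"
proof -
  define S where "S = line_of d w ` {x \<in> set Q. odd (line_pos w x)}"
  have S: "S \<subseteq> line_of d w ` grid n d" using Q unfolding S_def by auto
  have views_eq: "map (no_fun d w k) Q = map (yes_fun d w (flip_on S k)) Q"
    if k: "k \<in> labellings n d w" for k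
  proof (rule map_cong[OF refl])
    fix x assume x: "x \<in> set Q"
    have k1: "k (line_of d w x) \<le> 1" using labelling_le_1[OF k] x Q by auto
    have "line_of d w x \<in> S \<longleftrightarrow> odd (line_pos w x)"
      using x inj unfolding S_def by (auto dest: inj_onD)
    then show "no_fun d w k x = yes_fun d w (flip_on S k) x"
      using k1 no_bit_eq_flip[where k=k and d=d and w=w and x=x, OF k1]
      unfolding no_fun_def yes_fun_def flip_on_def by auto
  qed
  have "(\<Sum>k\<in>labellings n d w. D (map (no_fun d w k) Q))
      = (\<Sum>k\<in>labellings n d w. D (map (yes_fun d w (flip_on S k)) Q))"
    by (rule sum.cong[OF refl]) (simp only: views_eq)
  also have "\<dots> = (\<Sum>k\<in>labellings n d w. D (map (yes_fun d w k) Q))"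
    using sum.reindex_bij_betw[OF bij_betw_flip_on[OF S]] unfolding labellings_def .
  finally show ?thesis .
qed

section \<open>Primitive directions\<close>

definition primitive :: "nat \<Rightarrow> (nat \<Rightarrow> int) \<Rightarrow> bool" where
  "primitive d w \<longleftrightarrow> (\<forall>g::int. g > 1 \<longrightarrow> \<not> (\<forall>j<d. g dvd w j))"

definition admissible_dir :: "nat \<Rightarrow> (nat \<Rightarrow> int) \<Rightarrow> bool" where
  "admissible_dir d w \<longleftrightarrow> (\<forall>j\<ge>d. w j = 0) \<and> w 0 \<ge> 1 \<and> primitive d w"

lemma admissible_dir_eq_if_parallel:
  assumes w: "admissible_dir d w" and w': "admissible_dir d w'"
    and par: "\<And>j. j < d \<Longrightarrow> w 0 * w' j = w' 0 * w j"
  shows "w = w'"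
proof -
  define g where "g = gcd (w 0) (w' 0)"
  define \<alpha> where "\<alpha> = w 0 div g"
  define \<beta> where "\<beta> = w' 0 div g"
  have g: "g > 0" unfolding g_def using w unfolding admissible_dir_def by auto
  have w0: "w 0 = g * \<alpha>" "w' 0 = g * \<beta>" unfolding \<alpha>_def \<beta>_def g_def by simp_all
  have cop: "coprime \<alpha> \<beta>"
    unfolding \<alpha>_def \<beta>_def g_def using w unfolding admissible_dir_def by (intro div_gcd_coprime) auto
  have "0 < g * \<alpha>" "0 < g * \<beta>"
    using w w' unfolding w0[symmetric] admissible_dir_def by auto
  then have pos: "\<alpha> > 0" "\<beta> > 0"
    using g zero_less_mult_pos by blast+
  have eq: "\<alpha> * w' j = \<beta> * w j" if "j < d" for j
    using par[OF that] g unfolding w0 by (simp add: mult.assoc)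
  have "\<alpha> dvd w j" if "j < d" for j
    using eq[OF that] cop by (metis coprime_dvd_mult_right_iff dvd_triv_left)
  then have "\<alpha> = 1" using w pos unfolding admissible_dir_def primitive_def by force
  have "\<beta> dvd w' j" if "j < d" for j
    using eq[OF that] cop by (metis coprime_commute coprime_dvd_mult_right_iff dvd_triv_left)
  then have "\<beta> = 1" using w' pos unfolding admissible_dir_def primitive_def by force
  show "w = w'"
  proof
    fix j show "w j = w' j"
      using eq[of j] w w' \<open>\<alpha> = 1\<close> \<open>\<beta> = 1\<close> unfolding admissible_dir_def by (cases "j < d") auto
  qed
qed

text \<open>Two distinct points on a common \<open>w\<close>-line determine \<open>w\<close>: the wedge identities
  \<open>z\<^sub>i w\<^sub>j = z\<^sub>j w\<^sub>i\<close> for \<open>z = a - b\<close> make \<open>w\<close> and \<open>w'\<close> both proportional to \<open>z\<close>.\<close>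
lemma admissible_dir_eq_if_same_line:
  assumes a: "a \<in> grid n d" and b: "b \<in> grid n d" and ab: "a \<noteq> b"
    and w: "admissible_dir d w" and w': "admissible_dir d w'"
    and e: "line_of d w a = line_of d w b" and e': "line_of d w' a = line_of d w' b"
  shows "w = w'"
proof -
  define z where "z = (\<lambda>i. a i - b i)"
  have rel: "z i * of_int (u j) = z j * of_int (u i)"
    if "i < d" "j < d" "line_of d u a = line_of d u b" for i j u
  proof -
    have "wedge u a i j = wedge u b i j"
      using fun_cong[OF that(3), of "(i, j)"] that(1,2) unfolding line_of_def by auto
    then show ?thesis unfolding z_def wedge_def by (simp add: algebra_simps)
  qed
  obtain i0 where i0: "i0 < d" "z i0 \<noteq> 0"
  proof -
    obtain i where "a i \<noteq> b i" using ab by (auto simp: fun_eq_iff)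
    moreover have "i < d" using calculation a b unfolding grid_def by (cases "i < d") auto
    ultimately show ?thesis using that unfolding z_def by auto
  qed
  have d: "0 < d" using i0 by auto
  have "w 0 * w' j = w' 0 * w j" if j: "j < d" for j
  proof -
    have "(z i0 * z i0) * (of_int (w 0) * of_int (w' j))
        = (z i0 * of_int (w 0)) * (z i0 * of_int (w' j))" by (simp add: algebra_simps)
    also have "\<dots> = (z 0 * of_int (w i0)) * (z j * of_int (w' i0))"
      using rel[OF i0(1) d e] rel[OF i0(1) j e'] by simp
    also have "\<dots> = (z 0 * of_int (w' i0)) * (z j * of_int (w i0))" by (simp add: algebra_simps)
    also have "\<dots> = (z i0 * of_int (w' 0)) * (z i0 * of_int (w j))"
      using rel[OF i0(1) d e'] rel[OF i0(1) j e] by simp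
    also have "\<dots> = (z i0 * z i0) * (of_int (w' 0) * of_int (w j))" by (simp add: algebra_simps)
    finally have "real_of_int (w 0 * w' j) = real_of_int (w' 0 * w j)"
      using i0(2) by simp
    then show ?thesis by (simp only: of_int_eq_iff)
  qed
  then show ?thesis using admissible_dir_eq_if_parallel[OF w w'] by blast
qed

lemma card_dirs_with_collision_le:
  assumes W: "finite W" "\<And>w. w \<in> W \<Longrightarrow> admissible_dir d w" and Q: "set Q \<subseteq> grid n d"
  shows "card {w \<in> W. \<not> inj_on (line_of d w) (set Q)} \<le> length Q ^ 2"
proof -
  define bad where "bad = {w \<in> W. \<not> inj_on (line_of d w) (set Q)}"
  define collision where "collision = (\<lambda>w p. p \<in> set Q \<times> set Q \<and> fst p \<noteq> snd p
                                             \<and> line_of d w (fst p) = line_of d w (snd p))"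
  define pick where "pick = (\<lambda>w. SOME p. collision w p)"
  have "\<exists>p. collision w p" if "w \<in> bad" for w
    using that unfolding bad_def collision_def inj_on_def by auto
  then have pick: "collision w (pick w)" if "w \<in> bad" for w
    using that unfolding pick_def by (meson someI_ex)
  have "inj_on pick bad"
  proof (rule inj_onI)
    fix w w' assume ww: "w \<in> bad" "w' \<in> bad" "pick w = pick w'"
    have "fst (pick w) \<in> grid n d" "snd (pick w) \<in> grid n d" "fst (pick w) \<noteq> snd (pick w)"
      "line_of d w (fst (pick w)) = line_of d w (snd (pick w))"
      using pick[OF ww(1)] Q unfolding collision_def by auto
    moreover have "line_of d w' (fst (pick w)) = line_of d w' (snd (pick w))"
      using pick[OF ww(2)] unfolding ww(3) collision_def by auto
    moreover have "admissible_dir d w" "admissible_dir d w'"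
      using ww(1,2) W(2) unfolding bad_def by auto
    ultimately show "w = w'" by (intro admissible_dir_eq_if_same_line)
  qed
  then have "card bad \<le> card (set Q \<times> set Q)"
    using pick unfolding collision_def by (intro card_inj_on_le) (auto simp: image_subset_iff)
  also have "\<dots> \<le> length Q ^ 2"
    by (simp add: card_cartesian_product power2_eq_square card_length mult_le_mono)
  finally show ?thesis unfolding bad_def .
qed

section \<open>Yao's principle\<close>

lemma integrable_decision:
  assumes "\<forall>t\<in>set_pmf T. \<forall>v. 0 \<le> snd t v \<and> snd t v \<le> (1::real)"
  shows "integrable (measure_pmf T) (\<lambda>t. snd t (map f (fst t)))"
  using assms by (auto intro!: measure_pmf.integrable_const_bound[where B = 1] AE_pmfI)

definition run_advantage :: "nat \<Rightarrow> nat \<Rightarrow> (nat \<Rightarrow> int) \<Rightarrow> point list \<times> (real list \<Rightarrow> real) \<Rightarrow> real" where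
  "run_advantage n d w t = (\<Sum>k\<in>labellings n d w. snd t (map (yes_fun d w k) (fst t))
                        - snd t (map (no_fun d w k) (fst t))) / real (card (labellings n d w))"

lemma card_labellings_pos: "0 < real (card (labellings n d w))"
  using finite_labellings labellings_nonempty by (simp add: card_gt_0_iff)

lemma expectation_run_advantage:
  assumes "\<forall>t\<in>set_pmf T. \<forall>v. 0 \<le> snd t v \<and> snd t v \<le> 1"
  shows "measure_pmf.expectation T (run_advantage n d w)
       = (\<Sum>k\<in>labellings n d w. accept_prob T (yes_fun d w k) - accept_prob T (no_fun d w k))
         / real (card (labellings n d w))"
  unfolding run_advantage_def accept_prob_def case_prod_unfold
  by (simp add: integrable_decision[OF assms] Bochner_Integration.integral_diff)

lemma expectation_run_advantage_ge:
  assumes T: "nonadaptive_tester \<epsilon> (grid n d) T" and w: "admissible_dir d w"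
    and small: "5 * (\<Sum>i<d. \<bar>w i\<bar>) \<le> int n" and "n \<ge> 1" "\<epsilon> \<le> 1/10"
  shows "1/3 \<le> measure_pmf.expectation T (run_advantage n d w)"
proof -
  have "1/3 \<le> accept_prob T (yes_fun d w k) - accept_prob T (no_fun d w k)"
    if k: "k \<in> labellings n d w" for k
  proof -
    have "convex_fun_on (grid n d) (yes_fun d w k)"
      using labelling_le_1[OF k] by (rule convex_yes_fun)
    moreover have "far_from_convex \<epsilon> (grid n d) (no_fun d w k)"
      using w small assms(4,5) unfolding admissible_dir_def by (intro far_from_convex_no_fun) auto
    ultimately show ?thesis using T unfolding nonadaptive_tester_def by fastforce
  qed
  then have "(\<Sum>k\<in>labellings n d w. 1/3)
      \<le> (\<Sum>k\<in>labellings n d w. accept_prob T (yes_fun d w k) - accept_prob T (no_fun d w k))"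
    by (rule sum_mono)
  then show ?thesis
    using T card_labellings_pos[of n d w] unfolding nonadaptive_tester_def
    by (simp add: expectation_run_advantage field_simps)
qed

lemma run_advantage_le:
  assumes "set (fst t) \<subseteq> grid n d" "\<forall>v. 0 \<le> snd t v \<and> snd t v \<le> 1"
  shows "run_advantage n d w t \<le> (if inj_on (line_of d w) (set (fst t)) then 0 else 1)"
proof (cases "inj_on (line_of d w) (set (fst t))")
  case True
  then show ?thesis
    using sum_labellings_no_fun_eq_yes_fun[OF assms(1) True, of "snd t"]
    unfolding run_advantage_def by (simp add: sum_subtractf)
next
  case False
  have "snd t u - snd t v \<le> 1" for u v
    using spec[OF assms(2), of u] spec[OF assms(2), of v] by linarith
  then have "(\<Sum>k\<in>labellings n d w.
          snd t (map (yes_fun d w k) (fst t)) - snd t (map (no_fun d w k) (fst t)))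
      \<le> (\<Sum>k\<in>labellings n d w. 1)"
    by (intro sum_mono)
  then show ?thesis
    using False card_labellings_pos[of n d w] unfolding run_advantage_def by (simp add: field_simps)
qed

text \<open>Each direction in \<open>W\<close> needs expected advantage \<open>1/3\<close>, while a single run has
  advantage only for the directions in which two of its queries lie on a common line.\<close>
lemma card_admissible_dirs_le:
  assumes W: "finite W" "\<And>w. w \<in> W \<Longrightarrow> admissible_dir d w \<and> 5 * (\<Sum>i<d. \<bar>w i\<bar>) \<le> int n"
    and "n \<ge> 1" "\<epsilon> \<le> 1/10" and T: "nonadaptive_tester \<epsilon> (grid n d) T" and q: "query_bound T q"
  shows "real (card W) \<le> 3 * real q ^ 2"
proof -
  have supp: "\<forall>t\<in>set_pmf T. set (fst t) \<subseteq> grid n d \<and> (\<forall>v. 0 \<le> snd t v \<and> snd t v \<le> 1)"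
    using T unfolding nonadaptive_tester_def by auto
  have int: "integrable (measure_pmf T) (run_advantage n d w)" for w
    using supp unfolding run_advantage_def
    by (intro Bochner_Integration.integrable_divide_zero Bochner_Integration.integrable_sum
        Bochner_Integration.integrable_diff integrable_decision) auto
  have bound: "(\<Sum>w\<in>W. run_advantage n d w t) \<le> real q ^ 2" if t: "t \<in> set_pmf T" for t
  proof -
    have "(\<Sum>w\<in>W. run_advantage n d w t)
        \<le> (\<Sum>w\<in>W. if inj_on (line_of d w) (set (fst t)) then 0 else 1)"
      using supp t by (intro sum_mono run_advantage_le) auto
    also have "\<dots> = (\<Sum>w\<in>W. if \<not> inj_on (line_of d w) (set (fst t)) then 1 else 0)"
      by (intro sum.cong) auto
    also have "\<dots> = real (card {w \<in> W. \<not> inj_on (line_of d w) (set (fst t))})"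
      using W(1) by (simp add: sum.inter_filter[symmetric])
    also have "\<dots> \<le> real (length (fst t) ^ 2)"
      using card_dirs_with_collision_le[of W d "fst t" n] W supp t by (simp del: of_nat_power)
    also have "\<dots> \<le> real q ^ 2"
      using q t unfolding query_bound_def by (simp add: power_mono)
    finally show ?thesis .
  qed
  have "(\<Sum>w\<in>W. 1/3) \<le> (\<Sum>w\<in>W. measure_pmf.expectation T (run_advantage n d w))"
    using expectation_run_advantage_ge[OF T] W assms(3,4) by (intro sum_mono) blast
  then have "real (card W) / 3 \<le> (\<Sum>w\<in>W. measure_pmf.expectation T (run_advantage n d w))"
    by simp
  also have "\<dots> = measure_pmf.expectation T (\<lambda>t. \<Sum>w\<in>W. run_advantage n d w t)"
    using int by (simp add: Bochner_Integration.integral_sum)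
  also have "\<dots> \<le> measure_pmf.expectation T (\<lambda>_. real q ^ 2)"
    using int bound by (intro integral_mono_AE) (auto intro: AE_pmfI)
  finally show ?thesis by simp
qed

section \<open>Counting primitive directions\<close>

lemma power_Suc_add_le_plus_one_power:
  fixes t :: real assumes "t \<ge> 0"
  shows "t^(Suc d) + real (Suc d) * t^d \<le> (t + 1)^(Suc d)"
proof (cases "t = 0")
  case True then show ?thesis by (cases d) auto
next
  case False
  then have tp: "t > 0" using assms by auto
  have "1 + real (Suc d) * (1/t) \<le> (1 + 1/t)^(Suc d)"
    using tp by (intro Bernoulli_inequality) (simp add: le_divide_eq)
  then have "t^(Suc d) * (1 + real (Suc d) * (1/t)) \<le> t^(Suc d) * (1 + 1/t)^(Suc d)"
    using tp by (intro mult_left_mono) auto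
  also have "t^(Suc d) * (1 + 1/t)^(Suc d) = (t + 1)^(Suc d)"
    using tp by (simp add: power_mult_distrib[symmetric] field_simps)
  also have "t^(Suc d) * (1 + real (Suc d) * (1/t)) = t^(Suc d) + real (Suc d) * t^d"
    using tp by (simp add: field_simps)
  finally show ?thesis .
qed

lemma power_Suc_le_minus_one_power_add:
  fixes t :: real assumes "t \<ge> 1"
  shows "t^(Suc d) \<le> (t - 1)^(Suc d) + real (Suc d) * t^d"
proof -
  have tp: "t > 0" using assms by auto
  have "1 + real (Suc d) * (-1/t) \<le> (1 + (-1/t))^(Suc d)"
    using assms by (intro Bernoulli_inequality) (auto simp: field_simps)
  then have "t^(Suc d) * (1 + real (Suc d) * (-1/t)) \<le> t^(Suc d) * (1 + (-1/t))^(Suc d)"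
    using tp by (intro mult_left_mono) auto
  also have "t^(Suc d) * (1 + (-1/t))^(Suc d) = (t - 1)^(Suc d)"
    using tp by (simp add: power_mult_distrib[symmetric] field_simps)
  also have "t^(Suc d) * (1 + real (Suc d) * (-1/t)) = t^(Suc d) - real (Suc d) * t^d"
    using tp by (simp add: field_simps)
  finally show ?thesis by simp
qed

lemma sum_power_le: "(\<Sum>i<M. real i ^ d) \<le> real M ^ Suc d / real (Suc d)"
proof (induction M)
  case 0 then show ?case by simp
next
  case (Suc M)
  have "(\<Sum>i<Suc M. real i ^ d) = (\<Sum>i<M. real i ^ d) + real M ^ d" by simp
  also have "\<dots> \<le> real M ^ Suc d / real (Suc d) + real M ^ d" using Suc by simp
  also have "\<dots> = (real M ^ Suc d + real (Suc d) * real M ^ d) / real (Suc d)"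
    by (simp add: field_simps)
  also have "\<dots> \<le> (real M + 1) ^ Suc d / real (Suc d)"
    by (intro divide_right_mono power_Suc_add_le_plus_one_power) auto
  finally show ?case by (simp add: add.commute)
qed

lemma sum_power_diff_ge: "real (M - Suc d) ^ Suc d / real (Suc d) \<le> (\<Sum>i<M. real (i - d) ^ d)"
proof (induction M)
  case (Suc M)
  have "real (M - d) ^ Suc d \<le> real (M - Suc d) ^ Suc d + real (Suc d) * real (M - d) ^ d"
  proof (cases "Suc d \<le> M")
    case True
    then have pred: "real (M - Suc d) = real (M - d) - 1" and one: "1 \<le> real (M - d)" by auto
    show ?thesis unfolding pred using one by (rule power_Suc_le_minus_one_power_add)
  next
    case False
    then have "M - d = 0 \<or> M - d = 1 \<and> M - Suc d = 0" by auto
    then show ?thesis by auto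
  qed
  then have "real (M - d) ^ Suc d / real (Suc d)
      \<le> (real (M - Suc d) ^ Suc d + real (Suc d) * real (M - d) ^ d) / real (Suc d)"
    by (rule divide_right_mono) simp
  also have "\<dots> = real (M - Suc d) ^ Suc d / real (Suc d) + real (M - d) ^ d"
    by (simp add: add_divide_distrib)
  also have "\<dots> \<le> (\<Sum>i<M. real (i - d) ^ d) + real (M - d) ^ d"
    using Suc.IH by simp
  finally show ?case by simp
qed simp

lemma power_diff_ge_Bernoulli:
  assumes "d \<le> M"
  shows "(1 - real d * real d / real M) * real M ^ d \<le> real (M - d) ^ d"
proof (cases "M = 0")
  case False
  have "1 + real d * (- real d / real M) \<le> (1 + (- real d / real M)) ^ d"
    using assms False by (intro Bernoulli_inequality) simp
  moreover have "real (M - d) = real M * (1 + (- real d / real M))"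
    using assms False by (simp add: field_simps)
  ultimately show ?thesis
    by (simp add: power_mult_distrib mult.commute mult_left_mono)
qed (use assms in simp)

lemma sum_inverse_squares_le_aux: "M \<ge> 2 \<Longrightarrow> (\<Sum>g\<in>{2..M}. 1 / real g ^ 2) \<le> 3/4 - 1 / real M"
proof (induction M)
  case 0 then show ?case by simp
next
  case (Suc M)
  show ?case
  proof (cases "M \<ge> 2")
    case False
    then have "Suc M = 2" using Suc.prems by auto
    then show ?thesis by simp
  next
    case True
    have "(\<Sum>g\<in>{2..Suc M}. 1 / real g ^ 2) = (\<Sum>g\<in>{2..M}. 1 / real g ^ 2) + 1 / real (Suc M) ^ 2"
      using True by simp
    also have "\<dots> \<le> 3/4 - 1 / real M + 1 / real (Suc M) ^ 2" using Suc.IH True by simp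
    also have "\<dots> \<le> 3/4 - 1 / real (Suc M)"
    proof -
      have e: "1 / real M - 1 / real (Suc M) = 1 / (real M * real (Suc M))"
        using True by (simp add: field_simps)
      have "real M * real (Suc M) \<le> real (Suc M) ^ 2" by (simp add: power2_eq_square)
      then have "1 / real (Suc M) ^ 2 \<le> 1 / (real M * real (Suc M))" using True
        by (intro divide_left_mono) auto
      then have "1 / real (Suc M) ^ 2 \<le> 1 / real M - 1 / real (Suc M)" using e by simp
      then show ?thesis by simp
    qed
    finally show ?thesis .
  qed
qed

lemma sum_inverse_squares_le: "(\<Sum>g\<in>{2..M}. 1 / real g ^ 2) \<le> 3/4"
proof (cases "M \<ge> 2")
  case True
  moreover have "0 \<le> 1 / real M" by simp
  ultimately show ?thesis using sum_inverse_squares_le_aux[of M] by linarith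
next
  case False then have "{2..M} = {}" by auto
  then show ?thesis by simp
qed

lemma exp_1_ge: "exp 1 \<ge> (2.6::real)"
proof -
  have "(1 + 1 / real (16::nat)) ^ 16 \<le> exp (1::real)"
    using exp_ge_one_plus_x_over_n_power_n[of 16 1] by simp
  moreover have "(2.6::real) \<le> (1 + 1 / real (16::nat)) ^ 16" by (simp add: eval_nat_numeral)
  ultimately show ?thesis by linarith
qed

lemma exp_1_le_one_plus_inverse_power: assumes "d \<ge> 1" shows "exp 1 \<le> (1 + 1 / real d) ^ Suc d"
proof -
  have dp: "real d > 0" using assms by auto
  have "ln (real d / (real d + 1)) \<le> real d / (real d + 1) - 1"
    using dp by (intro ln_le_minus_one) auto
  also have "\<dots> = - 1 / (real d + 1)" using dp by (simp add: field_simps)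
  finally have l1: "ln (real d / (real d + 1)) \<le> - 1 / (real d + 1)" .
  have "ln (1 + 1 / real d) = - ln (real d / (real d + 1))"
    using dp by (simp add: ln_div field_simps)
  with l1 have "ln (1 + 1 / real d) \<ge> 1 / (real d + 1)" by simp
  then have "real (Suc d) * ln (1 + 1 / real d) \<ge> 1" using dp by (simp add: field_simps)
  then have "exp 1 \<le> exp (real (Suc d) * ln (1 + 1 / real d))" by simp
  also have "\<dots> = (1 + 1 / real d) ^ Suc d"
    using dp by (subst exp_of_nat_mult) (simp add: add_pos_pos)
  finally show ?thesis .
qed

lemma fact_mult_exp_le: "d \<ge> 1 \<Longrightarrow> fact d * exp (real d) \<le> exp 1 * real d ^ Suc d"
proof (induction d rule: dec_induct)
  case base then show ?case by simp
next
  case (step d)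
  have dp: "real d > 0" using step by auto
  have A: "fact (Suc d) * exp (real (Suc d)) = real (Suc d) * exp 1 * (fact d * exp (real d))"
    by (simp add: exp_add[symmetric] algebra_simps)
  have C0: "exp 1 * real d ^ Suc d \<le> (1 + 1 / real d) ^ Suc d * real d ^ Suc d"
    using exp_1_le_one_plus_inverse_power[OF step.hyps(1)] by (intro mult_right_mono) auto
  have C1: "(1 + 1 / real d) ^ Suc d * real d ^ Suc d = real (Suc d) ^ Suc d"
    using dp by (simp add: power_mult_distrib[symmetric] field_simps)
  have "fact (Suc d) * exp (real (Suc d)) \<le> real (Suc d) * exp 1 * (exp 1 * real d ^ Suc d)"
    unfolding A using step.IH by (intro mult_left_mono) auto
  also have "\<dots> \<le> real (Suc d) * exp 1 * real (Suc d) ^ Suc d"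
    using C0 C1 by (intro mult_left_mono) auto
  also have "\<dots> = exp 1 * real (Suc d) ^ Suc (Suc d)"
    by (simp only: power_Suc[of "real (Suc d)" "Suc d"] mult_ac)
  finally show ?case .
qed

lemma power_div_fact_ge:
  assumes "d \<ge> 1" "0 \<le> x"
  shows "(exp 1 * x / real d) ^ d / (exp 1 * real d) \<le> x ^ d / fact d"
proof -
  have d: "0 < real d" using assms(1) by simp
  have "fact d * exp 1 ^ d \<le> exp 1 * real d ^ Suc d"
    using fact_mult_exp_le[OF assms(1)] exp_of_nat_mult[of d "1::real"] by simp
  then have "exp 1 ^ d / (exp 1 * real d ^ Suc d) \<le> 1 / fact d"
    using d by (simp add: field_simps)
  then have "x ^ d * (exp 1 ^ d / (exp 1 * real d ^ Suc d)) \<le> x ^ d * (1 / fact d)"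
    using assms(2) by (intro mult_left_mono) auto
  moreover have "(exp 1 * x / real d) ^ d / (exp 1 * real d)
      = x ^ d * (exp 1 ^ d / (exp 1 * real d ^ Suc d))"
    by (simp add: power_mult_distrib power_divide ac_simps)
  ultimately show ?thesis by simp
qed

definition nonzero_lists :: "nat \<Rightarrow> nat \<Rightarrow> int list set" where
  "nonzero_lists d M =
     {xs. length xs = d \<and> (\<forall>x\<in>set xs. x \<noteq> 0) \<and> sum_list (map (\<lambda>x. nat \<bar>x\<bar>) xs) \<le> M}"

lemma finite_nonzero_lists: "finite (nonzero_lists d M)"
proof -
  have "nonzero_lists d M \<subseteq> {xs. set xs \<subseteq> {- int M..int M} \<and> length xs = d}"
  proof
    fix xs assume xs: "xs \<in> nonzero_lists d M"
    have "\<bar>x\<bar> \<le> int M" if "x \<in> set xs" for x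
    proof -
      have "nat \<bar>x\<bar> \<le> sum_list (map (\<lambda>x. nat \<bar>x\<bar>) xs)"
        using that by (intro member_le_sum_list) auto
      then show ?thesis using xs unfolding nonzero_lists_def by auto
    qed
    then have "set xs \<subseteq> {- int M..int M}" by (force simp: abs_le_iff)
    then show "xs \<in> {xs. set xs \<subseteq> {- int M..int M} \<and> length xs = d}"
      using xs unfolding nonzero_lists_def
      by auto
  qed
  moreover have "finite {xs. set xs \<subseteq> {- int M..int M} \<and> length xs = d}"
    by (intro finite_lists_length_eq) auto
  ultimately show ?thesis by (rule finite_subset)
qed

lemma nonzero_lists_0: "nonzero_lists 0 M = {[]}" unfolding nonzero_lists_def by auto

lemma nonzero_lists_Suc:
  "nonzero_lists (Suc d) M
     = (\<Union>i<M. (#) (int (M - i)) ` nonzero_lists d i \<union> (#) (- int (M - i)) ` nonzero_lists d i)"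
  (is "_ = ?S")
proof
  show "nonzero_lists (Suc d) M \<subseteq> ?S"
  proof
    fix xs assume xs: "xs \<in> nonzero_lists (Suc d) M"
    then obtain x ys where e: "xs = x # ys" unfolding nonzero_lists_def by (cases xs) auto
    have x0: "x \<noteq> 0" and ys0: "\<forall>y\<in>set ys. y \<noteq> 0" and len: "length ys = d"
      and sm: "nat \<bar>x\<bar> + sum_list (map (\<lambda>x. nat \<bar>x\<bar>) ys) \<le> M"
      using xs e unfolding nonzero_lists_def by auto
    define i where "i = M - nat \<bar>x\<bar>"
    have iM: "i < M" using x0 sm unfolding i_def by auto
    have ys: "ys \<in> nonzero_lists d i" using ys0 len sm unfolding nonzero_lists_def i_def by auto
    have "int (M - i) = \<bar>x\<bar>" using sm unfolding i_def by auto
    then have "x = int (M - i) \<or> x = - int (M - i)" by auto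
    then show "xs \<in> ?S" using iM ys e by blast
  qed
  show "?S \<subseteq> nonzero_lists (Suc d) M"
    unfolding nonzero_lists_def by auto
qed

lemma card_nonzero_lists_Suc:
  "card (nonzero_lists (Suc d) M) = (\<Sum>i<M. 2 * card (nonzero_lists d i))"
proof -
  define A where
    "A = (\<lambda>i. (#) (int (M - i)) ` nonzero_lists d i \<union> (#) (- int (M - i)) ` nonzero_lists d i)"
  have cA: "card (A i) = 2 * card (nonzero_lists d i)" if "i < M" for i
  proof -
    have "card (A i) = card ((#) (int (M - i)) ` nonzero_lists d i)
                       + card ((#) (- int (M - i)) ` nonzero_lists d i)"
      unfolding A_def using that by (intro card_Un_disjoint) (auto simp: finite_nonzero_lists)
    also have "\<dots> = card (nonzero_lists d i) + card (nonzero_lists d i)"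
      by (subst card_image, simp add: inj_on_def)+ simp
    finally show ?thesis by simp
  qed
  have "card (nonzero_lists (Suc d) M) = card (\<Union>i<M. A i)" unfolding nonzero_lists_Suc A_def ..
  also have "\<dots> = (\<Sum>i<M. card (A i))"
  proof (rule card_UN_disjoint)
    show "\<forall>i\<in>{..<M}. finite (A i)" unfolding A_def by (auto simp: finite_nonzero_lists)
    show "\<forall>i\<in>{..<M}. \<forall>j\<in>{..<M}. i \<noteq> j \<longrightarrow> A i \<inter> A j = {}"
      unfolding A_def by auto
  qed simp
  also have "\<dots> = (\<Sum>i<M. 2 * card (nonzero_lists d i))" using cA by simp
  finally show ?thesis .
qed

lemma card_nonzero_lists_le: "real (card (nonzero_lists d M)) \<le> 2^d * real M ^ d / fact d"
proof (induction d arbitrary: M)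
  case 0 then show ?case by (simp add: nonzero_lists_0)
next
  case (Suc d)
  have "real (card (nonzero_lists (Suc d) M)) = (\<Sum>i<M. 2 * real (card (nonzero_lists d i)))"
    unfolding card_nonzero_lists_Suc by simp
  also have "\<dots> \<le> (\<Sum>i<M. 2 * (2^d * real i ^ d / fact d))"
    by (intro sum_mono mult_left_mono Suc.IH) auto
  also have "\<dots> = 2 * 2^d / fact d * (\<Sum>i<M. real i ^ d)"
    by (simp add: sum_distrib_left mult.assoc)
  also have "\<dots> \<le> 2 * 2^d / fact d * (real M ^ Suc d / real (Suc d))"
    by (intro mult_left_mono sum_power_le) auto
  also have "\<dots> = 2 ^ Suc d * real M ^ Suc d / fact (Suc d)"
    by (simp add: field_simps)
  finally show ?case .
qed

lemma card_nonzero_lists_ge: "real (card (nonzero_lists d M)) \<ge> 2^d * real (M - d) ^ d / fact d"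
proof (induction d arbitrary: M)
  case 0 then show ?case by (simp add: nonzero_lists_0)
next
  case (Suc d)
  have "2 ^ Suc d * real (M - Suc d) ^ Suc d / fact (Suc d)
      = 2 * 2^d / fact d * (real (M - Suc d) ^ Suc d / real (Suc d))"
    by (simp add: field_simps)
  also have "\<dots> \<le> 2 * 2^d / fact d * (\<Sum>i<M. real (i - d) ^ d)"
    by (intro mult_left_mono sum_power_diff_ge) auto
  also have "\<dots> = (\<Sum>i<M. 2 * (2^d * real (i - d) ^ d / fact d))"
    by (simp add: sum_distrib_left mult.assoc)
  also have "\<dots> \<le> (\<Sum>i<M. 2 * real (card (nonzero_lists d i)))"
    by (intro sum_mono mult_left_mono Suc.IH) auto
  also have "\<dots> = real (card (nonzero_lists (Suc d) M))"
    unfolding card_nonzero_lists_Suc by simp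
  finally show ?case .
qed

definition positive_lists :: "nat \<Rightarrow> nat \<Rightarrow> int list set" where
  "positive_lists d M = {xs \<in> nonzero_lists d M. xs \<noteq> [] \<and> hd xs \<ge> 1}"

lemma finite_positive_lists: "finite (positive_lists d M)"
  unfolding positive_lists_def using finite_nonzero_lists by auto

lemma positive_lists_Suc: "positive_lists (Suc d) M = (\<Union>i<M. (#) (int (M - i)) ` nonzero_lists d i)"
proof
  show "positive_lists (Suc d) M \<subseteq> (\<Union>i<M. (#) (int (M - i)) ` nonzero_lists d i)"
  proof
    fix xs assume xs: "xs \<in> positive_lists (Suc d) M"
    then have "xs \<in> nonzero_lists (Suc d) M" unfolding positive_lists_def by auto
    then obtain i where i: "i < M"
      and "xs \<in> (#) (int (M - i)) ` nonzero_lists d i \<union> (#) (- int (M - i)) ` nonzero_lists d i"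
      unfolding nonzero_lists_Suc by auto
    moreover have "hd xs \<ge> 1" using xs unfolding positive_lists_def by auto
    ultimately show "xs \<in> (\<Union>i<M. (#) (int (M - i)) ` nonzero_lists d i)" by auto
  qed
  show "(\<Union>i<M. (#) (int (M - i)) ` nonzero_lists d i) \<subseteq> positive_lists (Suc d) M"
    unfolding positive_lists_def nonzero_lists_Suc by auto
qed

lemma card_positive_lists_Suc: "card (positive_lists (Suc d) M) = (\<Sum>i<M. card (nonzero_lists d i))"
proof -
  have "card (positive_lists (Suc d) M) = (\<Sum>i<M. card ((#) (int (M - i)) ` nonzero_lists d i))"
    unfolding positive_lists_Suc by (rule card_UN_disjoint) (auto simp: finite_nonzero_lists)
  also have "\<dots> = (\<Sum>i<M. card (nonzero_lists d i))"
    by (intro sum.cong refl card_image) (simp add: inj_on_def)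
  finally show ?thesis .
qed

lemma card_positive_lists_le:
  "real (card (positive_lists (Suc d) M)) \<le> 2^d * real M ^ Suc d / fact (Suc d)"
proof -
  have "real (card (positive_lists (Suc d) M)) = (\<Sum>i<M. real (card (nonzero_lists d i)))"
    unfolding card_positive_lists_Suc by simp
  also have "\<dots> \<le> (\<Sum>i<M. 2^d * real i ^ d / fact d)"
    by (intro sum_mono card_nonzero_lists_le)
  also have "\<dots> = 2^d / fact d * (\<Sum>i<M. real i ^ d)"
    by (simp add: sum_distrib_left)
  also have "\<dots> \<le> 2^d / fact d * (real M ^ Suc d / real (Suc d))"
    by (intro mult_left_mono sum_power_le) auto
  also have "\<dots> = 2^d * real M ^ Suc d / fact (Suc d)"
    by (simp add: field_simps)
  finally show ?thesis .
qed

lemma card_positive_lists_ge: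
  "2^d * real (M - Suc d) ^ Suc d / fact (Suc d) \<le> real (card (positive_lists (Suc d) M))"
proof -
  have "2^d * real (M - Suc d) ^ Suc d / fact (Suc d)
      = 2^d / fact d * (real (M - Suc d) ^ Suc d / real (Suc d))"
    by (simp add: field_simps)
  also have "\<dots> \<le> 2^d / fact d * (\<Sum>i<M. real (i - d) ^ d)"
    by (intro mult_left_mono sum_power_diff_ge) auto
  also have "\<dots> = (\<Sum>i<M. 2^d * real (i - d) ^ d / fact d)"
    by (simp add: sum_distrib_left)
  also have "\<dots> \<le> (\<Sum>i<M. real (card (nonzero_lists d i)))"
    by (intro sum_mono card_nonzero_lists_ge)
  also have "\<dots> = real (card (positive_lists (Suc d) M))"
    unfolding card_positive_lists_Suc by simp
  finally show ?thesis .
qed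

definition primitive_list :: "int list \<Rightarrow> bool" where
  "primitive_list xs \<longleftrightarrow> (\<forall>g::int. g > 1 \<longrightarrow> \<not> (\<forall>x\<in>set xs. g dvd x))"

definition primitive_lists :: "nat \<Rightarrow> nat \<Rightarrow> int list set" where
  "primitive_lists d M = {xs \<in> positive_lists d M. primitive_list xs}"

lemma map_div_in_positive_lists:
  assumes xs: "xs \<in> positive_lists d M" and g: "g > 1" "\<forall>x\<in>set xs. g dvd x"
  shows "map (\<lambda>x. x div g) xs \<in> positive_lists d (M div nat g)"
proof -
  define ys where "ys = map (\<lambda>x. x div g) xs"
  have xs_eq: "xs = map ((*) g) ys" unfolding ys_def using g by (simp add: map_idI)
  have "sum_list (map (\<lambda>x. nat \<bar>x\<bar>) xs) = nat g * sum_list (map (\<lambda>x. nat \<bar>x\<bar>) ys)"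
    unfolding xs_eq using g(1) by (simp add: sum_list_const_mult o_def abs_mult nat_mult_distrib)
  then have "sum_list (map (\<lambda>x. nat \<bar>x\<bar>) ys) * nat g \<le> M"
    using xs unfolding positive_lists_def nonzero_lists_def by (simp add: mult.commute)
  then have "sum_list (map (\<lambda>x. nat \<bar>x\<bar>) ys) \<le> M div nat g"
    using g(1) by (simp add: less_eq_div_iff_mult_less_eq)
  moreover have "y \<noteq> 0" if "y \<in> set ys" for y
    using that xs unfolding xs_eq positive_lists_def nonzero_lists_def by auto
  moreover have "hd ys \<ge> 1"
    using xs g(1) unfolding xs_eq positive_lists_def
    by (cases ys) (auto simp: int_one_le_iff_zero_less zero_less_mult_iff)
  ultimately show ?thesis
    using xs unfolding ys_def[symmetric] positive_lists_def nonzero_lists_def by (auto simp: ys_def)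
qed

lemma nonprimitive_positive_lists_subset:
  "{xs \<in> positive_lists d M. \<not> primitive_list xs}
     \<subseteq> (\<Union>g\<in>{2..M}. map ((*) (int g)) ` positive_lists d (M div g))"
proof
  fix xs assume xs: "xs \<in> {xs \<in> positive_lists d M. \<not> primitive_list xs}"
  then obtain g :: int where g: "g > 1" "\<forall>x\<in>set xs. g dvd x" unfolding primitive_list_def by auto
  have hd: "hd xs \<in> set xs" "hd xs \<ge> 1"
    using xs unfolding positive_lists_def by auto
  have "nat \<bar>hd xs\<bar> \<le> sum_list (map (\<lambda>x. nat \<bar>x\<bar>) xs)"
    using hd(1) by (intro member_le_sum_list) auto
  then have "nat g \<in> {2..M}"
    using g xs zdvd_imp_le[of g "hd xs"] unfolding positive_lists_def nonzero_lists_def by auto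
  moreover have "xs = map ((*) (int (nat g))) (map (\<lambda>x. x div g) xs)"
    using g by (simp add: map_idI)
  ultimately show "xs \<in> (\<Union>g\<in>{2..M}. map ((*) (int g)) ` positive_lists d (M div g))"
    using map_div_in_positive_lists[OF _ g] xs by blast
qed

lemma card_positive_lists_div_le:
  assumes "d \<ge> 1" "g \<ge> 2"
  shows "real (card (positive_lists (Suc d) (M div g)))
    \<le> 2^d * real M ^ Suc d / fact (Suc d) / real g ^ 2"
proof -
  have g: "real g \<ge> 2" using assms(2) by simp
  have "real (M div g) * real g \<le> real M"
    by (metis div_times_less_eq_dividend of_nat_le_iff of_nat_mult)
  then have "real (M div g) ^ Suc d \<le> (real M / real g) ^ Suc d"
    using g by (intro power_mono) (auto simp: le_divide_eq)
  also have "\<dots> = real M ^ Suc d / real g ^ Suc d" by (simp add: power_divide)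
  also have "\<dots> \<le> real M ^ Suc d / real g ^ 2"
    using g assms(1) by (intro divide_left_mono power_increasing) auto
  finally have "2^d * real (M div g) ^ Suc d / fact (Suc d)
      \<le> 2^d * (real M ^ Suc d / real g ^ 2) / fact (Suc d)"
    by (intro divide_right_mono mult_left_mono) auto
  then show ?thesis using card_positive_lists_le[of d "M div g"] by (simp add: ac_simps)
qed

lemma card_nonprimitive_positive_lists_le:
  assumes "d \<ge> 1"
  shows "real (card {xs \<in> positive_lists (Suc d) M. \<not> primitive_list xs})
       \<le> 2^d * real M ^ Suc d / fact (Suc d) * (3/4)"
proof -
  let ?A = "2^d * real M ^ Suc d / fact (Suc d)"
  have "card {xs \<in> positive_lists (Suc d) M. \<not> primitive_list xs}
      \<le> card (\<Union>g\<in>{2..M}. map ((*) (int g)) ` positive_lists (Suc d) (M div g))"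
    by (intro card_mono nonprimitive_positive_lists_subset) (auto intro: finite_positive_lists)
  also have "\<dots> \<le> (\<Sum>g\<in>{2..M}. card (map ((*) (int g)) ` positive_lists (Suc d) (M div g)))"
    by (rule card_UN_le) simp
  also have "\<dots> \<le> (\<Sum>g\<in>{2..M}. card (positive_lists (Suc d) (M div g)))"
    by (intro sum_mono card_image_le finite_positive_lists)
  finally have "real (card {xs \<in> positive_lists (Suc d) M. \<not> primitive_list xs})
      \<le> real (\<Sum>g\<in>{2..M}. card (positive_lists (Suc d) (M div g)))"
    by (rule of_nat_mono)
  also have "\<dots> = (\<Sum>g\<in>{2..M}. real (card (positive_lists (Suc d) (M div g))))"
    by simp
  also have "\<dots> \<le> (\<Sum>g\<in>{2..M}. ?A / real g ^ 2)"
    using assms by (intro sum_mono card_positive_lists_div_le) auto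
  also have "\<dots> = ?A * (\<Sum>g\<in>{2..M}. 1 / real g ^ 2)"
    by (simp add: sum_distrib_left)
  also have "\<dots> \<le> ?A * (3/4)"
    by (intro mult_left_mono sum_inverse_squares_le) auto
  finally show ?thesis .
qed

lemma card_primitive_lists_ge:
  assumes "d \<ge> 1" "8 * Suc d * Suc d \<le> M"
  shows "2^d * real M ^ Suc d / fact (Suc d) / 8 \<le> real (card (primitive_lists (Suc d) M))"
proof -
  define A where "A = 2^d * real M ^ Suc d / fact (Suc d)"
  have "positive_lists (Suc d) M
      = primitive_lists (Suc d) M \<union> {xs \<in> positive_lists (Suc d) M. \<not> primitive_list xs}"
    unfolding primitive_lists_def by auto
  then have "card (positive_lists (Suc d) M)
      \<le> card (primitive_lists (Suc d) M)
         + card {xs \<in> positive_lists (Suc d) M. \<not> primitive_list xs}"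
    by (metis card_Un_le)
  then have split: "real (card (positive_lists (Suc d) M))
      \<le> real (card (primitive_lists (Suc d) M)) + A * (3/4)"
    using card_nonprimitive_positive_lists_le[OF assms(1), of M] unfolding A_def by linarith
  have "0 < M" by (rule order.strict_trans2[OF _ assms(2)]) simp
  moreover have "real (8 * Suc d * Suc d) \<le> real M" using assms(2) by (rule of_nat_mono)
  ultimately have "real (Suc d) * real (Suc d) / real M \<le> 1/8"
    by (simp add: field_simps)
  then have "(7/8) * real M ^ Suc d \<le> (1 - real (Suc d) * real (Suc d) / real M) * real M ^ Suc d"
    by (intro mult_right_mono) auto
  also have "\<dots> \<le> real (M - Suc d) ^ Suc d"
    using assms(2) by (intro power_diff_ge_Bernoulli) (erule order.trans[rotated], simp)
  finally have "2^d * ((7/8) * real M ^ Suc d) / fact (Suc d)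
      \<le> 2^d * real (M - Suc d) ^ Suc d / fact (Suc d)"
    by (intro divide_right_mono mult_left_mono) auto
  moreover have "2^d * ((7/8) * real M ^ Suc d) / fact (Suc d) = (7/8) * A"
    unfolding A_def by simp
  ultimately show ?thesis
    using split card_positive_lists_ge[of d M] unfolding A_def[symmetric] by linarith
qed

lemma power_div_fact_ge_power:
  assumes "d \<ge> 1" "0 \<le> y" "103/100 * y \<le> exp 1 * x"
  shows "3/100 / exp 1 * (y / real d) ^ d \<le> x ^ d / fact d"
proof -
  have "0 \<le> exp 1 * x" using assms(2,3) by linarith
  then have "0 \<le> x" by (simp add: zero_le_mult_iff)
  have "3/100 / exp 1 * (y / real d) ^ d = 3/100 * real d * (y / real d) ^ d / (exp 1 * real d)"
    using assms(1) by simp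
  also have "\<dots> \<le> (103/100) ^ d * (y / real d) ^ d / (exp 1 * real d)"
    using Bernoulli_inequality[of "3/100 :: real" d] assms(2)
    by (intro divide_right_mono mult_right_mono) auto
  also have "\<dots> = (103/100 * y / real d) ^ d / (exp 1 * real d)"
    by (simp add: power_mult_distrib power_divide)
  also have "\<dots> \<le> (exp 1 * x / real d) ^ d / (exp 1 * real d)"
    using assms(2,3) by (intro divide_right_mono power_mono) auto
  also have "\<dots> \<le> x ^ d / fact d"
    using assms(1) \<open>0 \<le> x\<close> by (rule power_div_fact_ge)
  finally show ?thesis .
qed

text \<open>The radius \<open>n/5\<close> is chosen just above \<open>n/(2e)\<close>, where the number
  \<open>\<approx> (2M)\<^sup>d/d!\<close> of lattice points in the \<open>\<ell>\<^sub>1\<close>-ball of radius \<open>M\<close> overtakes \<open>(n/d)\<^sup>d\<close>.\<close>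
lemma card_primitive_lists_ge_power:
  assumes d: "d \<ge> 2" and n: "40 * d * d + 600 \<le> n"
  shows "3/10000 * (real n / real d) ^ d \<le> real (card (primitive_lists d (n div 5)))"
proof -
  obtain d' where d': "d = Suc d'" "d' \<ge> 1" using d by (cases d) auto
  define M where "M = n div 5"
  have "8 * d * d * 5 \<le> n" using n by simp
  then have "8 * Suc d' * Suc d' \<le> M"
    unfolding M_def d'(1)[symmetric] by (simp add: less_eq_div_iff_mult_less_eq)
  then have "2^d' * real M ^ d / fact d / 8 \<le> real (card (primitive_lists d M))"
    unfolding d'(1) by (rule card_primitive_lists_ge[OF d'(2)])
  moreover have "2^d' * real M ^ d = (2 * real M) ^ d / 2"
    unfolding d'(1) by (simp add: power_mult_distrib)
  ultimately have card: "(2 * real M) ^ d / fact d / 16 \<le> real (card (primitive_lists d M))"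
    by simp
  have "103/100 * real n \<le> exp 1 * (2 * real M)"
  proof -
    have "real n / 5 - 1 \<le> real M" unfolding M_def by linarith
    then have "26/10 * (2 * (real n / 5 - 1)) \<le> exp 1 * (2 * real M)"
      using exp_1_ge n by (intro mult_mono) auto
    moreover have "26/10 * (2 * (real n / 5 - 1)) = 104/100 * real n - 52/10"
      by (simp add: field_simps)
    moreover have "600 \<le> n" using n by linarith
    then have "600 \<le> real n" by simp
    ultimately show ?thesis by linarith
  qed
  then have bound: "3/100 / exp 1 * (real n / real d) ^ d \<le> (2 * real M) ^ d / fact d"
    using d by (intro power_div_fact_ge_power) auto
  have "3/10000 * (real n / real d) ^ d = 48/10000 * (real n / real d) ^ d / 16" by simp
  also have "\<dots> \<le> 3/100 / exp 1 * (real n / real d) ^ d / 16"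
    using exp_le by (intro divide_right_mono mult_right_mono) (auto simp: field_simps)
  also have "\<dots> \<le> (2 * real M) ^ d / fact d / 16"
    using bound by (rule divide_right_mono) simp
  also have "\<dots> \<le> real (card (primitive_lists d M))"
    by (rule card)
  finally show ?thesis unfolding M_def .
qed

definition dir_of_list :: "int list \<Rightarrow> nat \<Rightarrow> int" where
  "dir_of_list xs = (\<lambda>j. if j < length xs then xs ! j else 0)"

lemma inj_on_dir_of_list: "inj_on dir_of_list (primitive_lists d M)"
proof (rule inj_onI)
  fix xs ys assume "xs \<in> primitive_lists d M" "ys \<in> primitive_lists d M"
    and eq: "dir_of_list xs = dir_of_list ys"
  then have len: "length xs = d" "length ys = d"
    unfolding primitive_lists_def positive_lists_def nonzero_lists_def by auto
  show "xs = ys"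
  proof (rule nth_equalityI)
    fix i assume "i < length xs"
    then show "xs ! i = ys ! i" using fun_cong[OF eq, of i] len unfolding dir_of_list_def by simp
  qed (use len in simp)
qed

lemma admissible_dir_of_list:
  assumes xs: "xs \<in> primitive_lists d M"
  shows "admissible_dir d (dir_of_list xs) \<and> (\<Sum>i<d. \<bar>dir_of_list xs i\<bar>) \<le> int M"
proof -
  have x: "length xs = d" "xs \<noteq> []" "hd xs \<ge> 1" "primitive_list xs"
    "sum_list (map (\<lambda>x. nat \<bar>x\<bar>) xs) \<le> M"
    using xs unfolding primitive_lists_def positive_lists_def nonzero_lists_def by auto
  have "primitive d (dir_of_list xs)"
    unfolding primitive_def
  proof (intro allI impI notI)
    fix g :: int assume "g > 1" and "\<forall>j<d. g dvd dir_of_list xs j"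
    then have "\<forall>x\<in>set xs. g dvd x"
      using x(1) unfolding dir_of_list_def by (auto simp: in_set_conv_nth)
    then show False using x(4) \<open>g > 1\<close> unfolding primitive_list_def by auto
  qed
  moreover have "dir_of_list xs 0 \<ge> 1"
    using x(2,3) unfolding dir_of_list_def by (simp add: hd_conv_nth)
  moreover have "(\<Sum>i<d. \<bar>dir_of_list xs i\<bar>) = int (sum_list (map (\<lambda>x. nat \<bar>x\<bar>) xs))"
  proof -
    have "(\<Sum>i<d. \<bar>dir_of_list xs i\<bar>) = (\<Sum>i<length xs. \<bar>xs ! i\<bar>)"
      using x(1) unfolding dir_of_list_def by (intro sum.cong) auto
    also have "\<dots> = sum_list (map abs xs)"
      by (simp add: sum_list_sum_nth atLeast0LessThan)
    also have "\<dots> = int (sum_list (map (\<lambda>x. nat \<bar>x\<bar>) xs))"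
      by (induction xs) auto
    finally show ?thesis .
  qed
  ultimately show ?thesis
    using x(1,5) unfolding admissible_dir_def dir_of_list_def by auto
qed

lemma mult_powr_half_le_if_sq_le:
  fixes x y c :: real
  assumes "0 < x" "0 \<le> c" "0 \<le> y" "c^2 * x ^ d \<le> y^2"
  shows "c * x powr (real d / 2) \<le> y"
proof (rule power2_le_imp_le)
  have "(x powr (real d / 2))^2 = x powr (real d / 2 + real d / 2)"
    by (simp add: power2_eq_square flip: powr_add)
  also have "\<dots> = x ^ d"
    using assms(1) by (simp add: powr_realpow)
  finally show "(c * x powr (real d / 2))^2 \<le> y^2"
    using assms(4) by (simp add: power_mult_distrib)
qed (use assms in simp)

theorem theorem1p6:
  shows "\<exists>c>0. \<forall>d\<ge>2. \<exists>n0. \<forall>n\<ge>n0. \<forall>\<epsilon> T q.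
           0 < \<epsilon> \<and> \<epsilon> \<le> 1/10 \<and> nonadaptive_tester \<epsilon> (grid n d) T \<and> query_bound T q
           \<longrightarrow> real q \<ge> c * (real n / real d) powr (real d / 2)"
proof (intro exI[of _ "1/100"] conjI allI impI exI[of _ "40 * d * d + 600" for d])
  fix d n :: nat and \<epsilon> T q
  assume d: "2 \<le> d" and n: "40 * d * d + 600 \<le> n"
    and tester: "0 < \<epsilon> \<and> \<epsilon> \<le> 1/10 \<and> nonadaptive_tester \<epsilon> (grid n d) T \<and> query_bound T q"
  define W where "W = dir_of_list ` primitive_lists d (n div 5)"
  have "3/10000 * (real n / real d) ^ d \<le> real (card W)"
    using card_primitive_lists_ge_power[OF d n] unfolding W_def card_image[OF inj_on_dir_of_list] .
  also have "\<dots> \<le> 3 * real q ^ 2"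
  proof (rule card_admissible_dirs_le)
    show "finite W" unfolding W_def primitive_lists_def using finite_positive_lists by auto
    show "admissible_dir d w \<and> 5 * (\<Sum>i<d. \<bar>w i\<bar>) \<le> int n" if "w \<in> W" for w
      using that admissible_dir_of_list unfolding W_def by fastforce
  qed (use n tester in auto)
  finally show "1/100 * (real n / real d) powr (real d / 2) \<le> real q"
    using d n by (intro mult_powr_half_le_if_sq_le) (auto simp: power2_eq_square)
qed simp

end
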